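(* Let $n\ge2$, let $A$ be a random variable with values in $\{1,\dots,n\}$, $\mathbb{P}(A=i)=p_i$, $\sum_i p_i=1$, and let $(X_1,\dots,X_n)$ be independent of $A$ and multivariate normal with all means equal to $\mu<0$, all variances equal to $\sigma^2>0$, and all pairwise correlations equal to $\rho$. For $z\in\mathbb{R}$ let $h(z)=\mathbb{E}\left[\mathbb{I}(X_A>z)\sum_{i=1}^n X_i\right]$. Then $h(0)<0$ if \[-\frac{1}{n-1}\le\rho<\left(\frac{n}{n-1}\right)\left(\frac{-\mu}{\sigma}\right)M\left(\frac{-\mu}{\sigma}\right)-\frac{1}{n-1}.\]
   Context: $\phi,\Phi$ are the standard normal density and CDF, and $M(\alpha)=(1-\Phi(\alpha))/\phi(\alpha)$ is the Mills ratio. $h(z)$ is the long-run average overall performance of a firm that, in each period, picks a primary dimension $A$ and adopts the innovation iff its effect $X_A$ on that dimension exceeds the hurdle $z$. *)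

theory Defs
  imports "HOL-Probability.Probability"
begin

definition std_phi :: "real \<Rightarrow> real" where
  "std_phi x = std_normal_density x"

definition std_Phi :: "real \<Rightarrow> real" where
  "std_Phi x = (LINT t:{..x}|lborel. std_normal_density t)"

definition mills :: "real \<Rightarrow> real" where
  "mills \<alpha> = (1 - std_Phi \<alpha>) / std_phi \<alpha>"

definition normal_law :: "real \<Rightarrow> real \<Rightarrow> real measure" where
  "normal_law m v = (if v = 0 then return borel m
                     else density lborel (normal_density m (sqrt v)))"

text \<open>(X_1,...,X_n) on M is multivariate normal with mean vector mu and
  covariance matrix C: every linear combination is normal with the
  corresponding mean and variance (Cramer--Wold definition; allows singular C).\<close>
definition multivariate_normal ::
  "'a measure \<Rightarrow> nat \<Rightarrow> (nat \<Rightarrow> 'a \<Rightarrow> real) \<Rightarrow> (nat \<Rightarrow> real) \<Rightarrow> (nat \<Rightarrow> nat \<Rightarrow> real) \<Rightarrow> bool"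
where
  "multivariate_normal M n X mu C \<longleftrightarrow>
     (\<forall>i\<in>{1..n}. X i \<in> borel_measurable M) \<and>
     (\<forall>c :: nat \<Rightarrow> real.
        distr M borel (\<lambda>\<omega>. \<Sum>i=1..n. c i * X i \<omega>)
          = normal_law (\<Sum>i=1..n. c i * mu i) (\<Sum>i=1..n. \<Sum>j=1..n. c i * c j * C i j))"

definition h :: "'a measure \<Rightarrow> nat \<Rightarrow> ('a \<Rightarrow> nat) \<Rightarrow> (nat \<Rightarrow> 'a \<Rightarrow> real) \<Rightarrow> real \<Rightarrow> real" where
  "h M n A X z = (\<integral>\<omega>. (if X (A \<omega>) \<omega> > z then 1 else 0) * (\<Sum>i=1..n. X i \<omega>) \<partial>M)"

end

theory Submission
  imports Defs "HOL-Real_Asymp.Real_Asymp"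
begin

text \<open>
  Write \<open>S = X\<^sub>1 + \<dots> + X\<^sub>n\<close>. By independence of \<open>A\<close> and \<open>X\<close>,
  \<open>h(0) = \<Sum>\<^sub>a P(A = a) E[I(X\<^sub>a > 0) S]\<close>, so it suffices to bound each
  \<open>E[I(X\<^sub>a > 0) S]\<close> by a negative number. For \<open>t \<ge> 0\<close> the variable
  \<open>X\<^sub>a + t S\<close> is normal with mean \<open>\<mu>(1 + n t)\<close> and standard deviation
  \<open>\<sigma> sqrt(1 + (2t + n t\<^sup>2) c)\<close>, where \<open>c = 1 + (n - 1)\<rho> \<ge> 0\<close>, and
  \<open>t I(X\<^sub>a > 0) S \<le> (X\<^sub>a + t S)\<^sup>+ - X\<^sub>a\<^sup>+\<close>. Since \<open>(m, s) \<mapsto> E[(m + s W)\<^sup>+]\<close>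
  is convex for standard normal \<open>W\<close>, dividing by \<open>t\<close> and letting \<open>t \<rightarrow> 0\<^sup>+\<close> gives
  \<open>E[I(X\<^sub>a > 0) S] \<le> n \<mu> Q(\<alpha>) + \<sigma> c \<phi>(\<alpha>)\<close> with \<open>\<alpha> = -\<mu>/\<sigma>\<close> and
  \<open>Q = 1 - \<Phi> = M \<phi>\<close>; the upper bound on \<open>\<rho>\<close> says precisely that this is negative.
\<close>

definition std_normal_tail :: "real \<Rightarrow> real" where
  "std_normal_tail b = (\<integral>w. std_normal_density w * indicator {b<..} w \<partial>lborel)"

definition normal_pos_part_mean :: "real \<Rightarrow> real \<Rightarrow> real" where
  "normal_pos_part_mean m s = (\<integral>w. std_normal_density w * max (m + s * w) 0 \<partial>lborel)"

lemma std_normal_density_le_1: "std_normal_density x \<le> 1"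
proof -
  have "1 / sqrt (2 * pi) \<le> 1"
    using pi_gt3 by (simp add: field_simps)
  then show ?thesis
    unfolding std_normal_density_def by (intro mult_le_one) auto
qed

lemma integrable_std_normal_density_indicator:
  assumes "S \<in> sets borel"
  shows "integrable lborel (\<lambda>w. std_normal_density w * indicator S w)"
proof -
  have "integrable lborel std_normal_density"
    using integrable_std_normal_moment[of 0] by simp
  from integrable_mult_indicator[OF _ this] assms show ?thesis
    by (simp add: mult.commute)
qed

lemma integrable_std_normal_density_times_indicator_Ioi:
  "integrable lborel (\<lambda>w. std_normal_density w * (indicator {b<..} w * w))"
  by (rule Bochner_Integration.integrable_bound[OF integrable_std_normal_moment_abs[of 1]])
     (auto simp: abs_mult split: split_indicator)

lemma integrable_std_normal_density_times_pos_part: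
  "integrable lborel (\<lambda>w. std_normal_density w * max (m + s * w) 0)"
proof (rule Bochner_Integration.integrable_bound)
  show "integrable lborel (\<lambda>w. \<bar>m\<bar> * std_normal_density w + \<bar>s\<bar> * (std_normal_density w * \<bar>w\<bar>))"
    using integrable_std_normal_moment_abs[of 1] by auto
  show "AE w in lborel. norm (std_normal_density w * max (m + s * w) 0)
      \<le> norm (\<bar>m\<bar> * std_normal_density w + \<bar>s\<bar> * (std_normal_density w * \<bar>w\<bar>))"
  proof (intro AE_I2)
    fix w
    have "max (m + s * w) 0 \<le> \<bar>m\<bar> + \<bar>s\<bar> * \<bar>w\<bar>"
      using abs_ge_self[of m] abs_ge_self[of "s * w"] by (simp add: abs_mult)
    then have "std_normal_density w * max (m + s * w) 0 \<le> std_normal_density w * (\<bar>m\<bar> + \<bar>s\<bar> * \<bar>w\<bar>)"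
      by (rule mult_left_mono) simp
    then show "norm (std_normal_density w * max (m + s * w) 0)
      \<le> norm (\<bar>m\<bar> * std_normal_density w + \<bar>s\<bar> * (std_normal_density w * \<bar>w\<bar>))"
      by (simp add: algebra_simps)
  qed
qed simp

lemma std_normal_tail_eq: "std_normal_tail b = 1 - std_Phi b"
proof -
  have "std_Phi b + std_normal_tail b
      = (\<integral>w. std_normal_density w * indicator {..b} w + std_normal_density w * indicator {b<..} w \<partial>lborel)"
    unfolding std_Phi_def set_lebesgue_integral_def std_normal_tail_def
    by (subst Bochner_Integration.integral_add)
       (auto simp: mult.commute intro!: integrable_std_normal_density_indicator)
  also have "\<dots> = (\<integral>w. std_normal_density w \<partial>lborel)"
    by (intro Bochner_Integration.integral_cong) (auto split: split_indicator)
  finally show ?thesis by simp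
qed

lemma std_normal_tail_diff:
  assumes "b \<le> b'"
  shows "std_normal_tail b - std_normal_tail b' = (\<integral>w. std_normal_density w * indicator {b<..b'} w \<partial>lborel)"
  unfolding std_normal_tail_def
  using assms
  by (subst Bochner_Integration.integral_diff[symmetric])
     (auto intro!: integrable_std_normal_density_indicator Bochner_Integration.integral_cong
           split: split_indicator)

lemma std_normal_tail_lipschitz: "1-lipschitz_on UNIV std_normal_tail"
proof -
  have bound: "\<bar>std_normal_tail b - std_normal_tail b'\<bar> \<le> b' - b" if "b \<le> b'" for b b'
  proof -
    have "0 \<le> (\<integral>w. std_normal_density w * indicator {b<..b'} w \<partial>lborel)"
      by (intro Bochner_Integration.integral_nonneg) auto
    moreover have "(\<integral>w. std_normal_density w * indicator {b<..b'} w \<partial>lborel) \<le> (\<integral>w. indicator {b<..b'} w \<partial>lborel)"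
      using that
      by (intro Bochner_Integration.integral_mono integrable_std_normal_density_indicator)
         (auto simp: std_normal_density_le_1 split: split_indicator)
    ultimately show ?thesis
      using that by (simp add: std_normal_tail_diff)
  qed
  then show ?thesis
  proof (intro lipschitz_onI)
    fix x y :: real
    show "dist (std_normal_tail x) (std_normal_tail y) \<le> 1 * dist x y"
      using bound[of x y] bound[of y x] by (cases "x \<le> y") (auto simp: dist_real_def abs_minus_commute)
  qed simp
qed

lemma isCont_std_normal_tail: "isCont std_normal_tail x"
  using lipschitz_on_continuous_on[OF std_normal_tail_lipschitz]
  by (simp add: continuous_on_eq_continuous_at)

lemma isCont_std_normal_density: "isCont std_normal_density x"
  unfolding std_normal_density_def by (intro continuous_intros) auto

lemma integral_std_normal_density_times_indicator_Ioi:
  "(\<integral>w. std_normal_density w * (indicator {b<..} w * w) \<partial>lborel) = std_normal_density b"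
proof -
  have "(LBINT w=ereal b..\<infinity>. w * std_normal_density w) = 0 - (- std_normal_density b)"
  proof (rule interval_integral_FTC_integrable)
    fix w :: real
    show "((\<lambda>w. - std_normal_density w) has_vector_derivative w * std_normal_density w) (at w)"
      unfolding std_normal_density_def has_real_derivative_iff_has_vector_derivative[symmetric]
      by (auto intro!: derivative_eq_intros simp: field_simps power2_eq_square)
    show "isCont (\<lambda>w. w * std_normal_density w) w"
      using isCont_std_normal_density by simp
  next
    show "set_integrable lborel (einterval (ereal b) \<infinity>) (\<lambda>w. w * std_normal_density w)"
      unfolding set_integrable_def
      using integrable_std_normal_moment[of 1]
      by (intro integrable_mult_indicator) (simp_all add: mult.commute)
    show "(((\<lambda>w. - std_normal_density w) \<circ> real_of_ereal) \<longlongrightarrow> - std_normal_density b) (at_right (ereal b))"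
      using isCont_std_normal_density[of b]
      unfolding ereal_tendsto_simps isCont_def by (intro tendsto_intros) (simp add: filterlim_at_split)
    have "((\<lambda>w. - (1 / sqrt (2 * pi) * exp (- w\<^sup>2 / 2))) \<longlongrightarrow> - (1 / sqrt (2 * pi) * 0)) at_top"
      by real_asymp
    then show "(((\<lambda>w. - std_normal_density w) \<circ> real_of_ereal) \<longlongrightarrow> 0) (at_left \<infinity>)"
      unfolding ereal_tendsto_simps std_normal_density_def by simp
  qed simp
  then show ?thesis
    by (simp add: interval_lebesgue_integral_def set_lebesgue_integral_def ac_simps)
qed

lemma normal_pos_part_mean_diff_le:
  assumes "s' > 0"
  shows "normal_pos_part_mean m' s' - normal_pos_part_mean m s
    \<le> (m' - m) * std_normal_tail (- m' / s') + (s' - s) * std_normal_density (- m' / s')"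
proof -
  let ?b = "- m' / s'"
  \<comment> \<open>supporting line of the convex function \<open>x \<mapsto> max x 0\<close> at \<open>m' + s' w\<close>\<close>
  have pointwise: "std_normal_density w * max (m' + s' * w) 0 - std_normal_density w * max (m + s * w) 0
      \<le> (m' - m) * (std_normal_density w * indicator {?b<..} w)
        + (s' - s) * (std_normal_density w * (indicator {?b<..} w * w))" for w
  proof -
    have "w \<in> {?b<..} \<longleftrightarrow> m' + s' * w > 0"
      using assms by (auto simp: field_simps)
    then have "max (m' + s' * w) 0 - max (m + s * w) 0 \<le> indicator {?b<..} w * ((m' - m) + (s' - s) * w)"
      by (auto simp: algebra_simps split: split_indicator)
    then have "std_normal_density w * (max (m' + s' * w) 0 - max (m + s * w) 0)
        \<le> std_normal_density w * (indicator {?b<..} w * ((m' - m) + (s' - s) * w))"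
      by (rule mult_left_mono) simp
    then show ?thesis
      by (simp add: algebra_simps)
  qed
  have int_tail: "integrable lborel (\<lambda>w. std_normal_density w * indicator {?b<..} w)"
    by (rule integrable_std_normal_density_indicator) simp
  note int_moment = integrable_std_normal_density_times_indicator_Ioi[of ?b]
  note int_pos_part = integrable_std_normal_density_times_pos_part
  have "normal_pos_part_mean m' s' - normal_pos_part_mean m s
      = (\<integral>w. std_normal_density w * max (m' + s' * w) 0 - std_normal_density w * max (m + s * w) 0 \<partial>lborel)"
    unfolding normal_pos_part_mean_def
    by (rule Bochner_Integration.integral_diff[symmetric, OF int_pos_part int_pos_part])
  also have "\<dots> \<le> (\<integral>w. (m' - m) * (std_normal_density w * indicator {?b<..} w)
        + (s' - s) * (std_normal_density w * (indicator {?b<..} w * w)) \<partial>lborel)"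
    by (intro Bochner_Integration.integral_mono pointwise Bochner_Integration.integrable_diff
        Bochner_Integration.integrable_add integrable_mult_right int_pos_part int_tail int_moment)
  also have "\<dots> = (m' - m) * std_normal_tail ?b + (s' - s) * std_normal_density ?b"
    using int_tail int_moment
    by (simp add: std_normal_tail_def integral_std_normal_density_times_indicator_Ioi)
  finally show ?thesis .
qed

lemma integral_normal_law:
  fixes g :: "real \<Rightarrow> real"
  assumes s: "s > 0" and g[measurable]: "g \<in> borel_measurable borel"
  shows "integral\<^sup>L (normal_law m (s\<^sup>2)) g = (\<integral>w. std_normal_density w * g (m + s * w) \<partial>lborel)"
proof -
  have "integral\<^sup>L (normal_law m (s\<^sup>2)) g = (\<integral>x. normal_density m s x * g x \<partial>lborel)"
    using s by (simp add: normal_law_def integral_density)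
  also have "\<dots> = s * (\<integral>w. normal_density m s (m + s * w) * g (m + s * w) \<partial>lborel)"
    using s lborel_integral_real_affine[where c = s and t = m and f = "\<lambda>x. normal_density m s x * g x"]
    by simp
  also have "\<dots> = (\<integral>w. std_normal_density w * g (m + s * w) \<partial>lborel)"
  proof -
    have "s * normal_density m s (m + s * w) = std_normal_density w" for w
      using s by (simp add: normal_density_def real_sqrt_mult power_mult_distrib field_simps)
    then show ?thesis
      by (simp flip: integral_mult_right_zero add: mult.assoc[symmetric])
  qed
  finally show ?thesis .
qed

lemma (in prob_space) integrable_normal_law:
  assumes [measurable]: "random_variable borel Z"
    and law: "distr M borel Z = normal_law m (s\<^sup>2)" and s: "s > 0"
  shows "integrable M Z"
proof -
  have "integrable (distr M borel Z) (\<lambda>x. x)"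
    unfolding law normal_law_def
    using s by (simp add: integrable_density integrable_normal_moment_nz_1)
  then show ?thesis
    by (simp add: integrable_distr_eq)
qed

lemma (in prob_space) integral_comp_normal_law:
  fixes g :: "real \<Rightarrow> real"
  assumes [measurable]: "random_variable borel Z" "g \<in> borel_measurable borel"
    and law: "distr M borel Z = normal_law m (s\<^sup>2)" and s: "s > 0"
  shows "(\<integral>\<omega>. g (Z \<omega>) \<partial>M) = (\<integral>w. std_normal_density w * g (m + s * w) \<partial>lborel)"
  using integral_normal_law[OF s, of g m] by (simp add: integral_distr flip: law)

lemma (in prob_space) integrable_indicator_pos_times:
  fixes Y S :: "'a \<Rightarrow> real"
  assumes "random_variable borel Y" and S: "integrable M S"
  shows "integrable M (\<lambda>\<omega>. (if Y \<omega> > 0 then 1 else 0) * S \<omega>)"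
proof (rule Bochner_Integration.integrable_bound[OF S])
  show "(\<lambda>\<omega>. (if Y \<omega> > 0 then 1 else 0) * S \<omega>) \<in> borel_measurable M"
    using assms(1) borel_measurable_integrable[OF S] by measurable
  show "AE \<omega> in M. norm ((if Y \<omega> > 0 then 1 else 0) * S \<omega>) \<le> norm (S \<omega>)"
    by (intro AE_I2) simp
qed

lemma (in prob_space) integral_indicator_pos_times_le_quotient:
  fixes Y S :: "'a \<Rightarrow> real" and m s :: "real \<Rightarrow> real"
  assumes Y: "integrable M Y" and S: "integrable M S"
    and law: "\<And>t. t \<ge> 0 \<Longrightarrow> distr M borel (\<lambda>\<omega>. Y \<omega> + t * S \<omega>) = normal_law (m t) ((s t)\<^sup>2)"
    and s_pos: "\<And>t. t \<ge> 0 \<Longrightarrow> s t > 0"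
    and "t > 0"
  shows "(\<integral>\<omega>. (if Y \<omega> > 0 then 1 else 0) * S \<omega> \<partial>M)
    \<le> (m t - m 0) / t * std_normal_tail (- m t / s t) + (s t - s 0) / t * std_normal_density (- m t / s t)"
proof -
  have pos_part: "(\<integral>\<omega>. max (Y \<omega> + r * S \<omega>) 0 \<partial>M) = normal_pos_part_mean (m r) (s r)" if "r \<ge> 0" for r
    unfolding normal_pos_part_mean_def
    using Y S law[OF that] s_pos[OF that]
    by (intro integral_comp_normal_law) auto
  have "t * (\<integral>\<omega>. (if Y \<omega> > 0 then 1 else 0) * S \<omega> \<partial>M)
      = (\<integral>\<omega>. t * ((if Y \<omega> > 0 then 1 else 0) * S \<omega>) \<partial>M)"
    by simp
  also have "\<dots> \<le> (\<integral>\<omega>. max (Y \<omega> + t * S \<omega>) 0 - max (Y \<omega>) 0 \<partial>M)"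
  proof (rule Bochner_Integration.integral_mono)
    show "integrable M (\<lambda>\<omega>. t * ((if Y \<omega> > 0 then 1 else 0) * S \<omega>))"
      using Y S by (intro integrable_mult_right integrable_indicator_pos_times) auto
    show "integrable M (\<lambda>\<omega>. max (Y \<omega> + t * S \<omega>) 0 - max (Y \<omega>) 0)"
      using Y S by auto
    show "t * ((if Y \<omega> > 0 then 1 else 0) * S \<omega>) \<le> max (Y \<omega> + t * S \<omega>) 0 - max (Y \<omega>) 0" for \<omega>
      using \<open>t > 0\<close> by auto
  qed
  also have "\<dots> = normal_pos_part_mean (m t) (s t) - normal_pos_part_mean (m 0) (s 0)"
    using Y S pos_part[of t] pos_part[of 0] \<open>t > 0\<close> by (simp add: Bochner_Integration.integral_diff)
  also have "\<dots> \<le> (m t - m 0) * std_normal_tail (- m t / s t) + (s t - s 0) * std_normal_density (- m t / s t)"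
    using s_pos[of t] \<open>t > 0\<close> by (intro normal_pos_part_mean_diff_le) auto
  finally have "(\<integral>\<omega>. (if Y \<omega> > 0 then 1 else 0) * S \<omega> \<partial>M)
      \<le> ((m t - m 0) * std_normal_tail (- m t / s t) + (s t - s 0) * std_normal_density (- m t / s t)) / t"
    using \<open>t > 0\<close> by (simp add: pos_le_divide_eq mult.commute)
  then show ?thesis
    by (simp add: add_divide_distrib)
qed

lemma (in prob_space) integral_indicator_pos_times_le:
  fixes Y S :: "'a \<Rightarrow> real" and m s :: "real \<Rightarrow> real"
  assumes Y: "integrable M Y" and S: "integrable M S"
    and law: "\<And>t. t \<ge> 0 \<Longrightarrow> distr M borel (\<lambda>\<omega>. Y \<omega> + t * S \<omega>) = normal_law (m t) ((s t)\<^sup>2)"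
    and s_pos: "\<And>t. t \<ge> 0 \<Longrightarrow> s t > 0"
    and m: "(m has_real_derivative m') (at_right 0)"
    and s: "(s has_real_derivative s') (at_right 0)"
  shows "(\<integral>\<omega>. (if Y \<omega> > 0 then 1 else 0) * S \<omega> \<partial>M)
    \<le> m' * std_normal_tail (- m 0 / s 0) + s' * std_normal_density (- m 0 / s 0)"
proof (rule tendsto_lowerbound)
  have "((\<lambda>t. - m t / s t) \<longlongrightarrow> - m 0 / s 0) (at_right 0)"
    using DERIV_continuous[OF m] DERIV_continuous[OF s] s_pos[of 0]
    by (intro tendsto_intros) (auto simp: continuous_within)
  moreover have "((\<lambda>t. (m t - m 0) / t) \<longlongrightarrow> m') (at_right 0)"
    "((\<lambda>t. (s t - s 0) / t) \<longlongrightarrow> s') (at_right 0)"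
    using m s by (simp_all add: has_field_derivative_iff)
  ultimately show "((\<lambda>t. (m t - m 0) / t * std_normal_tail (- m t / s t)
      + (s t - s 0) / t * std_normal_density (- m t / s t))
    \<longlongrightarrow> m' * std_normal_tail (- m 0 / s 0) + s' * std_normal_density (- m 0 / s 0)) (at_right 0)"
    by (intro tendsto_add tendsto_mult isCont_tendsto_compose[OF isCont_std_normal_tail]
        isCont_tendsto_compose[OF isCont_std_normal_density])
  show "\<forall>\<^sub>F t in at_right 0. (\<integral>\<omega>. (if Y \<omega> > 0 then 1 else 0) * S \<omega> \<partial>M)
    \<le> (m t - m 0) / t * std_normal_tail (- m t / s t) + (s t - s 0) / t * std_normal_density (- m t / s t)"
    using eventually_at_right_less[of 0]
    by eventually_elim (rule integral_indicator_pos_times_le_quotient[OF Y S law s_pos])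
qed simp

lemma mills_bound_imp_neg:
  fixes n \<mu> \<sigma> \<rho> :: real
  assumes "\<sigma> > 0" "n > 1"
    and "\<rho> < n / (n - 1) * (- \<mu> / \<sigma>) * mills (- \<mu> / \<sigma>) - 1 / (n - 1)"
  shows "n * \<mu> * std_normal_tail (- \<mu> / \<sigma>) + \<sigma> * (1 + (n - 1) * \<rho>) * std_normal_density (- \<mu> / \<sigma>) < 0"
proof -
  define \<alpha> where "\<alpha> = - \<mu> / \<sigma>"
  have \<phi>_pos: "std_normal_density \<alpha> > 0"
    by (simp add: normal_density_pos)
  have "(n - 1) * \<rho> < (n - 1) * (n / (n - 1) * \<alpha> * mills \<alpha> - 1 / (n - 1))"
    using assms(2,3) by (simp add: \<alpha>_def)
  also have "\<dots> = n * \<alpha> * mills \<alpha> - 1"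
    using assms(2) by (simp add: right_diff_distrib)
  finally have "1 + (n - 1) * \<rho> < n * \<alpha> * mills \<alpha>"
    by simp
  then have "\<sigma> * (1 + (n - 1) * \<rho>) * std_normal_density \<alpha> < \<sigma> * (n * \<alpha> * mills \<alpha>) * std_normal_density \<alpha>"
    using assms(1) \<phi>_pos by simp
  also have "\<dots> = - (n * \<mu> * std_normal_tail \<alpha>)"
    using assms(1) \<phi>_pos by (simp add: \<alpha>_def mills_def std_phi_def std_normal_tail_eq)
  finally show ?thesis
    by (simp add: \<alpha>_def)
qed

lemma sum_sum_equicorrelated:
  fixes c :: "'i \<Rightarrow> real"
  assumes "finite I"
  shows "(\<Sum>i\<in>I. \<Sum>j\<in>I. c i * c j * (if i = j then v else r * v))
       = v * ((1 - r) * (\<Sum>i\<in>I. (c i)\<^sup>2) + r * (\<Sum>i\<in>I. c i)\<^sup>2)"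
proof -
  have "(\<Sum>i\<in>I. \<Sum>j\<in>I. c i * c j * (if i = j then v else r * v))
      = (\<Sum>i\<in>I. \<Sum>j\<in>I. r * v * (c i * c j) + (if i = j then (1 - r) * v * (c i)\<^sup>2 else 0))"
    by (intro sum.cong refl) (auto simp: algebra_simps power2_eq_square)
  also have "\<dots> = (\<Sum>i\<in>I. \<Sum>j\<in>I. r * v * (c i * c j)) + (1 - r) * v * (\<Sum>i\<in>I. (c i)\<^sup>2)"
    using assms by (simp add: sum.distrib sum_distrib_left)
  also have "(\<Sum>i\<in>I. \<Sum>j\<in>I. r * v * (c i * c j)) = r * v * ((\<Sum>i\<in>I. c i) * (\<Sum>j\<in>I. c j))"
    unfolding sum_product by (simp only: sum_distrib_left)
  finally show ?thesis
    by (simp add: power2_eq_square algebra_simps)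
qed

lemma multivariate_normal_measurable:
  assumes "multivariate_normal M n X mu C" "i \<in> {1..n}"
  shows "X i \<in> borel_measurable M"
  using assms unfolding multivariate_normal_def by blast

lemma (in prob_space) multivariate_normal_integrable:
  assumes mvn: "multivariate_normal M n X mu C" and i: "i \<in> {1..n}" and "C i i > 0"
  shows "integrable M (X i)"
proof (rule integrable_normal_law)
  define c :: "nat \<Rightarrow> real" where "c j = (if j = i then 1 else 0)" for j
  have "distr M borel (\<lambda>\<omega>. \<Sum>j=1..n. c j * X j \<omega>)
      = normal_law (\<Sum>j=1..n. c j * mu j) (\<Sum>j=1..n. \<Sum>k=1..n. c j * c k * C j k)"
    using mvn unfolding multivariate_normal_def by blast
  moreover have "c j * y = (if j = i then y else 0)" for j and y :: real
    by (simp add: c_def)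
  moreover have "c j * c k * C j k = (if k = i then if j = i then C i i else 0 else 0)" for j k
    by (simp add: c_def)
  ultimately show "distr M borel (X i) = normal_law (mu i) ((sqrt (C i i))\<^sup>2)"
    using i \<open>C i i > 0\<close> by (simp add: sum.delta)
qed (use multivariate_normal_measurable[OF mvn i] \<open>C i i > 0\<close> in auto)

lemma multivariate_normal_equicorrelated_law:
  assumes "multivariate_normal M n X (\<lambda>i. \<mu>) (\<lambda>i j. if i = j then v else r * v)"
  shows "distr M borel (\<lambda>\<omega>. \<Sum>i=1..n. c i * X i \<omega>)
    = normal_law (\<mu> * (\<Sum>i=1..n. c i)) (v * ((1 - r) * (\<Sum>i=1..n. (c i)\<^sup>2) + r * (\<Sum>i=1..n. c i)\<^sup>2))"
  using assms unfolding multivariate_normal_def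
  by (simp add: sum_sum_equicorrelated sum_distrib_left mult.commute)

lemma multivariate_normal_equicorrelated_coordinate_plus_sum_law:
  fixes t :: real
  assumes "multivariate_normal M n X (\<lambda>i. \<mu>) (\<lambda>i j. if i = j then v else r * v)" and a: "a \<in> {1..n}"
  shows "distr M borel (\<lambda>\<omega>. X a \<omega> + t * (\<Sum>i=1..n. X i \<omega>))
    = normal_law (\<mu> * (1 + n * t)) (v * (1 + (2 * t + n * t\<^sup>2) * (1 + (real n - 1) * r)))"
proof -
  define c where "c i = t + (if i = a then 1 else 0)" for i :: nat
  have "(\<Sum>i=1..n. c i * X i \<omega>) = X a \<omega> + t * (\<Sum>i=1..n. X i \<omega>)" for \<omega>
  proof -
    have "(\<Sum>i=1..n. c i * X i \<omega>) = (\<Sum>i=1..n. t * X i \<omega> + (if i = a then X i \<omega> else 0))"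
      unfolding c_def by (intro sum.cong) (auto simp: algebra_simps)
    then show ?thesis
      using a by (simp add: sum.distrib sum_distrib_left)
  qed
  moreover have "(\<Sum>i=1..n. c i) = 1 + n * t"
    using a by (simp add: c_def sum.distrib)
  moreover have "(\<Sum>i=1..n. (c i)\<^sup>2) = 1 + 2 * t + n * t\<^sup>2"
  proof -
    have "(\<Sum>i=1..n. (c i)\<^sup>2) = (\<Sum>i=1..n. t\<^sup>2 + (if i = a then 2 * t + 1 else 0))"
      unfolding c_def by (intro sum.cong) (auto simp: power2_eq_square algebra_simps)
    then show ?thesis
      using a by (simp add: sum.distrib)
  qed
  ultimately show ?thesis
    using multivariate_normal_equicorrelated_law[OF assms(1), of c]
    by (simp add: power2_eq_square algebra_simps)
qed

lemma (in prob_space) equicorrelated_indicator_times_sum_le: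
  assumes mvn: "multivariate_normal M n X (\<lambda>i. \<mu>) (\<lambda>i j. if i = j then \<sigma>\<^sup>2 else \<rho> * \<sigma>\<^sup>2)"
    and a: "a \<in> {1..n}" and "\<sigma> > 0" and c_nonneg: "1 + (real n - 1) * \<rho> \<ge> 0"
  shows "(\<integral>\<omega>. (if X a \<omega> > 0 then 1 else 0) * (\<Sum>i=1..n. X i \<omega>) \<partial>M)
    \<le> n * \<mu> * std_normal_tail (- \<mu> / \<sigma>) + \<sigma> * (1 + (real n - 1) * \<rho>) * std_normal_density (- \<mu> / \<sigma>)"
proof -
  define c where "c = 1 + (real n - 1) * \<rho>"
  define s where "s t = \<sigma> * sqrt (1 + (2 * t + n * t\<^sup>2) * c)" for t :: real
  have X_int: "integrable M (X i)" if "i \<in> {1..n}" for i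
    using multivariate_normal_integrable[OF mvn that] \<open>\<sigma> > 0\<close> by simp
  have s_pos: "s t > 0" if "t \<ge> 0" for t
    using \<open>\<sigma> > 0\<close> c_nonneg that by (simp add: s_def c_def add_pos_nonneg)
  have law: "distr M borel (\<lambda>\<omega>. X a \<omega> + t * (\<Sum>i=1..n. X i \<omega>)) = normal_law (\<mu> * (1 + n * t)) ((s t)\<^sup>2)"
    if "t \<ge> 0" for t :: real
    using multivariate_normal_equicorrelated_coordinate_plus_sum_law[OF mvn a, of t] c_nonneg that
    by (simp add: s_def c_def power_mult_distrib)
  have S_int: "integrable M (\<lambda>\<omega>. \<Sum>i=1..n. X i \<omega>)"
    using X_int by auto
  have m': "((\<lambda>t. \<mu> * (1 + n * t)) has_real_derivative n * \<mu>) (at_right 0)"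
    by (auto intro!: derivative_eq_intros)
  have s': "(s has_real_derivative \<sigma> * c) (at_right 0)"
    unfolding s_def by (rule has_field_derivative_at_within) (auto intro!: derivative_eq_intros)
  show ?thesis
    using integral_indicator_pos_times_le[OF X_int[OF a] S_int law s_pos m' s']
    by (simp add: s_def c_def)
qed

lemma (in prob_space) indep_var_iff_indep_set:
  "indep_var S X T Y \<longleftrightarrow> (random_variable S X \<and> random_variable T Y) \<and>
    indep_set {X -` A \<inter> space M | A. A \<in> sets S} {Y -` A \<inter> space M | A. A \<in> sets T}"
  unfolding indep_var_def indep_vars_def2 indep_set_def UNIV_bool
  by (intro arg_cong2[where f="(\<and>)"] arg_cong2[where f=indep_sets] ext)
     (auto split: bool.split)

lemma (in prob_space) indep_set_mono:
  assumes "indep_set A B" "A' \<subseteq> A" "B' \<subseteq> B"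
  shows "indep_set A' B'"
  using assms unfolding indep_sets2_eq by (meson order_trans subsetD)

lemma vimage_sets_comp_subset:
  assumes Z: "Z \<in> measurable M K" and q: "q \<in> measurable K L"
  shows "{(\<lambda>\<omega>. q (Z \<omega>)) -` B \<inter> space M | B. B \<in> sets L} \<subseteq> {Z -` S \<inter> space M | S. S \<in> sets K}"
proof safe
  fix B assume "B \<in> sets L"
  then have "(\<lambda>\<omega>. q (Z \<omega>)) -` B \<inter> space M = Z -` (q -` B \<inter> space K) \<inter> space M"
    and "q -` B \<inter> space K \<in> sets K"
    using measurable_space[OF Z] measurable_sets[OF q] by auto
  then show "\<exists>S. (\<lambda>\<omega>. q (Z \<omega>)) -` B \<inter> space M = Z -` S \<inter> space M \<and> S \<in> sets K"
    by blast
qed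

lemma (in prob_space) indep_var_comp_of_indep_set:
  assumes indep: "indep_set {Z -` S \<inter> space M | S. S \<in> sets K} {W -` S \<inter> space M | S. S \<in> sets K'}"
    and Z: "Z \<in> measurable M K" and W: "W \<in> measurable M K'"
    and q: "q \<in> measurable K L" and r: "r \<in> measurable K' L'"
  shows "indep_var L (\<lambda>\<omega>. q (Z \<omega>)) L' (\<lambda>\<omega>. r (W \<omega>))"
proof -
  have "indep_set {(\<lambda>\<omega>. q (Z \<omega>)) -` B \<inter> space M | B. B \<in> sets L} {(\<lambda>\<omega>. r (W \<omega>)) -` B \<inter> space M | B. B \<in> sets L'}"
    using indep vimage_sets_comp_subset[OF Z q] vimage_sets_comp_subset[OF W r]
    by (rule indep_set_mono)
  then show ?thesis
    using Z W q r by (simp add: indep_var_iff_indep_set)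
qed

lemma (in prob_space) integral_at_independent_index:
  fixes A :: "'a \<Rightarrow> 'i" and V :: "'a \<Rightarrow> 'b" and f :: "'i \<Rightarrow> 'b \<Rightarrow> real"
  assumes "finite I" and A: "A \<in> measurable M (count_space UNIV)" and A_I: "\<And>\<omega>. \<omega> \<in> space M \<Longrightarrow> A \<omega> \<in> I"
    and V: "V \<in> measurable M N"
    and indep: "indep_set {A -` S \<inter> space M | S. S \<in> sets (count_space UNIV)} {V -` S \<inter> space M | S. S \<in> sets N}"
    and f: "\<And>a. a \<in> I \<Longrightarrow> f a \<in> borel_measurable N"
    and f_int: "\<And>a. a \<in> I \<Longrightarrow> integrable M (\<lambda>\<omega>. f a (V \<omega>))"
  shows "(\<integral>\<omega>. f (A \<omega>) (V \<omega>) \<partial>M) = (\<Sum>a\<in>I. prob {\<omega> \<in> space M. A \<omega> = a} * (\<integral>\<omega>. f a (V \<omega>) \<partial>M))"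
proof -
  have A_a: "{\<omega> \<in> space M. A \<omega> = a} \<in> events" for a
    using A by measurable
  have integrable_indicator_A: "integrable M (\<lambda>\<omega>. indicator {a} (A \<omega>) :: real)" for a
    using measurable_compose[OF A, of "indicator {a}" borel]
    by (intro integrable_const_bound[where B=1]) (auto split: split_indicator)
  have indicator_A: "(\<integral>\<omega>. indicator {a} (A \<omega>) \<partial>M :: real) = prob {\<omega> \<in> space M. A \<omega> = a}" for a
  proof -
    have "(\<integral>\<omega>. indicator {a} (A \<omega>) \<partial>M) = (\<integral>\<omega>. indicator {\<omega> \<in> space M. A \<omega> = a} \<omega> \<partial>M :: real)"
      by (intro Bochner_Integration.integral_cong) (auto split: split_indicator)
    then show ?thesis
      using A_a by simp
  qed
  have indep_a: "indep_var borel (\<lambda>\<omega>. indicator {a} (A \<omega>) :: real) borel (\<lambda>\<omega>. f a (V \<omega>))" if "a \<in> I" for a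
    using f[OF that] by (intro indep_var_comp_of_indep_set[OF indep A V]) auto
  have "(\<integral>\<omega>. f (A \<omega>) (V \<omega>) \<partial>M) = (\<integral>\<omega>. (\<Sum>a\<in>I. indicator {a} (A \<omega>) * f a (V \<omega>)) \<partial>M)"
    using A_I \<open>finite I\<close>
    by (intro Bochner_Integration.integral_cong) (auto simp: indicator_def sum.delta)
  also have "\<dots> = (\<Sum>a\<in>I. (\<integral>\<omega>. indicator {a} (A \<omega>) * f a (V \<omega>) \<partial>M))"
    using indep_var_integrable[OF indep_a integrable_indicator_A f_int]
    by (intro Bochner_Integration.integral_sum) blast
  also have "\<dots> = (\<Sum>a\<in>I. prob {\<omega> \<in> space M. A \<omega> = a} * (\<integral>\<omega>. f a (V \<omega>) \<partial>M))"
    using indep_var_lebesgue_integral[OF indep_a integrable_indicator_A f_int]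
    by (simp add: indicator_A)
  finally show ?thesis .
qed

lemma (in prob_space) integral_at_independent_index_le:
  fixes A :: "'a \<Rightarrow> 'i" and V :: "'a \<Rightarrow> 'b" and f :: "'i \<Rightarrow> 'b \<Rightarrow> real"
  assumes "finite I" and A: "A \<in> measurable M (count_space UNIV)" and A_I: "\<And>\<omega>. \<omega> \<in> space M \<Longrightarrow> A \<omega> \<in> I"
    and V: "V \<in> measurable M N"
    and indep: "indep_set {A -` S \<inter> space M | S. S \<in> sets (count_space UNIV)} {V -` S \<inter> space M | S. S \<in> sets N}"
    and f: "\<And>a. a \<in> I \<Longrightarrow> f a \<in> borel_measurable N"
    and f_int: "\<And>a. a \<in> I \<Longrightarrow> integrable M (\<lambda>\<omega>. f a (V \<omega>))"
    and f_le: "\<And>a. a \<in> I \<Longrightarrow> (\<integral>\<omega>. f a (V \<omega>) \<partial>M) \<le> B"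
  shows "(\<integral>\<omega>. f (A \<omega>) (V \<omega>) \<partial>M) \<le> B"
proof -
  have index: "(\<integral>\<omega>. g (A \<omega>) (V \<omega>) \<partial>M) = (\<Sum>a\<in>I. prob {\<omega> \<in> space M. A \<omega> = a} * (\<integral>\<omega>. g a (V \<omega>) \<partial>M))"
    if "\<And>a. a \<in> I \<Longrightarrow> g a \<in> borel_measurable N" "\<And>a. a \<in> I \<Longrightarrow> integrable M (\<lambda>\<omega>. g a (V \<omega>))"
    for g :: "'i \<Rightarrow> 'b \<Rightarrow> real"
    using A_I by (rule integral_at_independent_index[OF \<open>finite I\<close> A _ V indep that])
  have "(\<integral>\<omega>. f (A \<omega>) (V \<omega>) \<partial>M) = (\<Sum>a\<in>I. prob {\<omega> \<in> space M. A \<omega> = a} * (\<integral>\<omega>. f a (V \<omega>) \<partial>M))"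
    by (rule index[OF f f_int])
  also have "\<dots> \<le> (\<Sum>a\<in>I. prob {\<omega> \<in> space M. A \<omega> = a} * B)"
    by (intro sum_mono mult_left_mono f_le) auto
  also have "\<dots> = B"
  proof -
    have "(\<integral>\<omega>. B \<partial>M) = (\<Sum>a\<in>I. prob {\<omega> \<in> space M. A \<omega> = a} * (\<integral>\<omega>. B \<partial>M))"
      by (rule index) auto
    then show ?thesis
      by (simp add: prob_space)
  qed
  finally show ?thesis .
qed

theorem proposition5:
  fixes M :: "'a measure" and n :: nat and A :: "'a \<Rightarrow> nat"
    and X :: "nat \<Rightarrow> 'a \<Rightarrow> real" and \<mu> \<sigma> \<rho> :: real
  assumes "prob_space M"
    and "n \<ge> 2"
    and "A \<in> measurable M (count_space UNIV)"
    and "\<forall>\<omega>\<in>space M. A \<omega> \<in> {1..n}"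
    and "multivariate_normal M n X (\<lambda>i. \<mu>)
           (\<lambda>i j. if i = j then \<sigma>\<^sup>2 else \<rho> * \<sigma>\<^sup>2)"
    and "prob_space.indep_set M
           {A -` S \<inter> space M | S. S \<in> sets (count_space UNIV)}
           {(\<lambda>\<omega>. restrict (\<lambda>i. X i \<omega>) {1..n}) -` S \<inter> space M | S.
              S \<in> sets (Pi\<^sub>M {1..n} (\<lambda>_. borel))}"
    and "\<mu> < 0" and "\<sigma> > 0"
    and "- 1 / (real n - 1) \<le> \<rho>"
    and "\<rho> < (real n / (real n - 1)) * (- \<mu> / \<sigma>) * mills (- \<mu> / \<sigma>) - 1 / (real n - 1)"
  shows "h M n A X 0 < 0"
proof -
  interpret prob_space M by fact
  have n: "real n > 1"
    using assms(2) by simp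
  have c_nonneg: "1 + (real n - 1) * \<rho> \<ge> 0"
    using assms(9) n by (simp add: field_simps)
  define V where "V = (\<lambda>\<omega>. restrict (\<lambda>i. X i \<omega>) {1..n})"
  define f where "f a v = (if v a > 0 then 1 else 0) * (\<Sum>i=1..n. v i)" for a and v :: "nat \<Rightarrow> real"
  have X: "X i \<in> borel_measurable M" if "i \<in> {1..n}" for i
    using multivariate_normal_measurable[OF assms(5) that] .
  have fV: "f a (V \<omega>) = (if X a \<omega> > 0 then 1 else 0) * (\<Sum>i=1..n. X i \<omega>)" if "a \<in> {1..n}" for a \<omega>
    using that by (simp add: f_def V_def)
  have "h M n A X 0 = (\<integral>\<omega>. f (A \<omega>) (V \<omega>) \<partial>M)"
    unfolding h_def using assms(4) by (intro Bochner_Integration.integral_cong) (auto simp: fV)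
  also have "\<dots> \<le> n * \<mu> * std_normal_tail (- \<mu> / \<sigma>) + \<sigma> * (1 + (real n - 1) * \<rho>) * std_normal_density (- \<mu> / \<sigma>)"
  proof (rule integral_at_independent_index_le[OF _ assms(3) _ _ assms(6)[folded V_def]])
    show "V \<in> measurable M (Pi\<^sub>M {1..n} (\<lambda>_. borel))"
      unfolding V_def by (rule measurable_restrict) (rule X)
    fix a assume a: "a \<in> {1..n}"
    then show "f a \<in> borel_measurable (Pi\<^sub>M {1..n} (\<lambda>_. borel))"
      unfolding f_def by measurable
    show "integrable M (\<lambda>\<omega>. f a (V \<omega>))"
      using multivariate_normal_integrable[OF assms(5)] assms(8) X a
      by (auto simp: fV intro!: integrable_indicator_pos_times)
    show "(\<integral>\<omega>. f a (V \<omega>) \<partial>M) \<le> n * \<mu> * std_normal_tail (- \<mu> / \<sigma>) + \<sigma> * (1 + (real n - 1) * \<rho>) * std_normal_density (- \<mu> / \<sigma>)"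
      using equicorrelated_indicator_times_sum_le[OF assms(5) a assms(8) c_nonneg] a by (simp add: fV)
  qed (use assms(4) in auto)
  also have "\<dots> < 0"
    by (rule mills_bound_imp_neg[OF assms(8) n assms(10)])
  finally show ?thesis .
qed

end
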